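(* Let $f_1,\dots,f_n$ be monotone linear functions and $\sigma$ a permutation of $[n]$. Then $f^\sigma<\min\{f^{\sigma_1},f^{\sigma_{n-1}}\}\ \Rightarrow\ \theta(f^\sigma)+\pi\in(\theta(f_{\sigma(n)}),\theta(f_{\sigma(1)}))_{2\pi}$, and $f^\sigma>\max\{f^{\sigma_1},f^{\sigma_{n-1}}\}\ \Rightarrow\ \theta(f^\sigma)\in(\theta(f_{\sigma(n)}),\theta(f_{\sigma(1)}))_{2\pi}$.
   Context: A linear function is $f(x)=ax+b$; monotone means $a>0$. $\vec f=(b,1-a)^\top$ and $\theta(f)\in[0,2\pi)$ is its polar angle ($\bot$ if $\vec f=0$). $(\theta_1,\theta_2)_{2\pi}=\{\theta\in(\lambda_1,\lambda_2)\mid\lambda_1-\theta_1,\lambda_2-\theta_2\in2\pi\mathbb{Z},\ \lambda_2-\lambda_1\in[0,2\pi)\}$, membership being taken modulo $2\pi$. For a permutation $\sigma$ of $[n]$, $f^\sigma=f_{\sigma(n)}\circ\cdots\circ f_{\sigma(1)}$; for $k\in\{0,\dots,n-1\}$ the $k$-shift $\sigma_k$ is defined by $\sigma_k(i)=\sigma(i+k)$ for $i\le n-k$ and $\sigma_k(i)=\sigma(i+k-n)$ for $i>n-k$, so that $f^{\sigma_k}=f_{\sigma(k)}\circ\cdots\circ f_{\sigma(1)}\circ f_{\sigma(n)}\circ\cdots\circ f_{\sigma(k+1)}$. Inequalities between functions are pointwise (for all $x$). *)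

theory Defs
  imports Complex_Main "HOL-Combinatorics.Permutations"
begin

definition monotone_linear :: "(real \<Rightarrow> real) \<Rightarrow> bool" where
  "monotone_linear g \<longleftrightarrow> (\<exists>a b. a > 0 \<and> g = (\<lambda>x. a * x + b))"

definition lin_coeffs :: "(real \<Rightarrow> real) \<Rightarrow> real \<times> real" where
  "lin_coeffs g = (THE p. \<forall>x. g x = fst p * x + snd p)"

definition lin_vec :: "(real \<Rightarrow> real) \<Rightarrow> real \<times> real" where
  "lin_vec g = (snd (lin_coeffs g), 1 - fst (lin_coeffs g))"

text \<open>Polar angle in [0, 2 pi) of the vector of g; None encodes bottom (zero vector).\<close>
definition theta :: "(real \<Rightarrow> real) \<Rightarrow> real option" where
  "theta g = (if lin_vec g = (0, 0) then None
     else Some (THE t. 0 \<le> t \<and> t < 2 * pi \<and>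
        (\<exists>r > 0. lin_vec g = (r * cos t, r * sin t))))"

text \<open>The open arc (t1, t2)_{2 pi}, with membership modulo 2 pi.\<close>
definition arc2pi :: "real \<Rightarrow> real \<Rightarrow> real set" where
  "arc2pi t1 t2 = {t. \<exists>l1 l2 (k1::int) (k2::int) (m::int).
      l1 = t1 + 2 * pi * of_int k1 \<and> l2 = t2 + 2 * pi * of_int k2 \<and>
      0 \<le> l2 - l1 \<and> l2 - l1 < 2 * pi \<and>
      l1 < t + 2 * pi * of_int m \<and> t + 2 * pi * of_int m < l2}"

fun seq_comp :: "(nat \<Rightarrow> real \<Rightarrow> real) \<Rightarrow> nat \<Rightarrow> real \<Rightarrow> real" where
  "seq_comp g 0 = id"
| "seq_comp g (Suc k) = g (Suc k) \<circ> seq_comp g k"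

definition perm_comp :: "(nat \<Rightarrow> real \<Rightarrow> real) \<Rightarrow> (nat \<Rightarrow> nat) \<Rightarrow> nat \<Rightarrow> real \<Rightarrow> real" where
  "perm_comp f \<sigma> n = seq_comp (\<lambda>i. f (\<sigma> i)) n"

definition kshift :: "(nat \<Rightarrow> nat) \<Rightarrow> nat \<Rightarrow> nat \<Rightarrow> nat \<Rightarrow> nat" where
  "kshift \<sigma> n k i = (if i \<le> n - k then \<sigma> (i + k) else \<sigma> (i + k - n))"

end

theory Submission imports Defs begin

text \<open>Write \<open>P = f\<^sup>\<sigma>\<close> as \<open>F \<circ> G = H \<circ> K\<close> with \<open>F = f\<^sub>\<sigma>\<^sub>(\<^sub>n\<^sub>)\<close> and \<open>K = f\<^sub>\<sigma>\<^sub>(\<^sub>1\<^sub>)\<close>; the two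
  shifts are then \<open>G \<circ> F\<close> and \<open>K \<circ> H\<close>. All four compositions have the same slope, so they
  compare as their values at 0. For affine maps these differences are, up to a positive factor,
  the cross products of the vectors of \<open>F\<close> and of \<open>K\<close> with the vector of \<open>P\<close>, whose signs are
  those of \<open>sin (\<theta>(P) - \<theta>(F))\<close> and \<open>sin (\<theta>(K) - \<theta>(P))\<close>. These signs place \<open>\<theta>(P)\<close>, or
  \<open>\<theta>(P) + \<pi>\<close>, strictly inside the arc from \<open>\<theta>(F)\<close> to \<open>\<theta>(K)\<close>.\<close>

lemma lin_coeffs_affine: "lin_coeffs (\<lambda>x. a * x + b) = (a, b)"
  unfolding lin_coeffs_def
proof (rule the_equality)
  fix p assume h: "\<forall>x. a * x + b = fst p * x + snd p"
  from h[rule_format, of 0] have "b = snd p" by simp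
  moreover from h[rule_format, of 1] this have "a = fst p" by simp
  ultimately show "p = (a, b)" by (simp add: prod_eq_iff)
qed simp

lemma lin_vec_affine: "lin_vec (\<lambda>x. a * x + b) = (b, 1 - a)"
  by (simp add: lin_vec_def lin_coeffs_affine)

lemma polar_angle_unique:
  fixes r r' t t' :: real
  assumes "r > 0" "r' > 0" "0 \<le> t" "t < 2 * pi" "0 \<le> t'" "t' < 2 * pi"
    and "(r * cos t, r * sin t) = (r' * cos t', r' * sin t')"
  shows "t = t'"
proof -
  have c: "r * cos t = r' * cos t'" and s: "r * sin t = r' * sin t'" using assms(7) by auto
  have "(r * cos t)\<^sup>2 + (r * sin t)\<^sup>2 = (r' * cos t')\<^sup>2 + (r' * sin t')\<^sup>2" using c s by simp
  then have "r\<^sup>2 = r'\<^sup>2" by (simp add: power_mult_distrib flip: distrib_left)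
  then have "r = r'" using assms(1,2) by (simp add: power2_eq_iff)
  then have "cos t = cos t'" "sin t = sin t'" using c s assms(1) by auto
  then obtain k :: int where k: "t = t' + 2 * pi * k" using sin_cos_eq_iff by metis
  with assms(3-6) have "2 * pi * k < 2 * pi * 1" "2 * pi * (-1) < 2 * pi * k" by linarith+
  then have "real_of_int k < 1" "- 1 < real_of_int k"
    using mult_less_cancel_left_pos[of "2 * pi" "real_of_int k" 1]
      mult_less_cancel_left_pos[of "2 * pi" "- 1" "real_of_int k"] by simp_all
  then have "k = 0" by linarith
  with k show ?thesis by simp
qed

lemma theta_polar:
  assumes "lin_vec g \<noteq> (0, 0)"
  obtains t r where "theta g = Some t" "r > 0" "lin_vec g = (r * cos t, r * sin t)"
proof -
  obtain x y where xy: "lin_vec g = (x, y)" by fastforce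
  define r where "r = sqrt (x\<^sup>2 + y\<^sup>2)"
  have pos: "x\<^sup>2 + y\<^sup>2 > 0" using assms xy by (simp add: sum_power2_gt_zero_iff)
  then have r: "r > 0" and r2: "r\<^sup>2 = x\<^sup>2 + y\<^sup>2" by (simp_all add: r_def)
  have "(x / r)\<^sup>2 + (y / r)\<^sup>2 = (x\<^sup>2 + y\<^sup>2) / r\<^sup>2" by (simp add: power_divide add_divide_distrib)
  also have "\<dots> = 1" using r2 pos by (metis divide_self less_irrefl)
  finally have "(x / r)\<^sup>2 + (y / r)\<^sup>2 = 1" .
  then obtain t where t: "0 \<le> t" "t < 2 * pi" "x / r = cos t" "y / r = sin t"
    by (rule sincos_total_2pi)
  have v: "lin_vec g = (r * cos t, r * sin t)" using xy t(3,4) r by (auto simp: field_simps)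
  have "(THE t. 0 \<le> t \<and> t < 2 * pi \<and> (\<exists>r > 0. lin_vec g = (r * cos t, r * sin t))) = t"
  proof (rule the_equality)
    fix t' assume "0 \<le> t' \<and> t' < 2 * pi \<and> (\<exists>r' > 0. lin_vec g = (r' * cos t', r' * sin t'))"
    then obtain r' where "0 \<le> t'" "t' < 2 * pi" "r' > 0" "lin_vec g = (r' * cos t', r' * sin t')"
      by blast
    with t(1,2) r v show "t' = t" by (metis polar_angle_unique)
  qed (use t(1,2) r v in blast)
  then have "theta g = Some t" using assms by (simp add: theta_def)
  with r v show thesis by (intro that)
qed

lemma sin_pos_mod_2pi:
  assumes "sin d > 0"
  obtains \<alpha> and m :: int where "d = \<alpha> + 2 * pi * m" "0 < \<alpha>" "\<alpha> < pi"
proof -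
  define m where "m = \<lfloor>d / (2 * pi)\<rfloor>"
  define \<alpha> where "\<alpha> = d - 2 * pi * m"
  have "m \<le> d / (2 * pi)" "d / (2 * pi) < m + 1" unfolding m_def by linarith+
  then have "0 \<le> \<alpha>" "\<alpha> < 2 * pi" unfolding \<alpha>_def by (auto simp: field_simps)
  moreover have "sin \<alpha> > 0" using assms by (simp add: \<alpha>_def sin_diff)
  ultimately have "0 < \<alpha>" "\<alpha> < pi" using sin_le_zero[of \<alpha>] by (auto intro: ccontr)
  then show thesis using that[of \<alpha> m] by (simp add: \<alpha>_def)
qed

lemma arc2pi_if_sin_pos:
  assumes "sin (s - t1) > 0" "sin (t2 - s) > 0"
  shows "s \<in> arc2pi t1 t2"
proof -
  obtain \<alpha> m1 where a: "s - t1 = \<alpha> + 2 * pi * of_int m1" "0 < \<alpha>" "\<alpha> < pi"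
    using sin_pos_mod_2pi[OF assms(1)] .
  obtain \<beta> m2 where b: "t2 - s = \<beta> + 2 * pi * of_int m2" "0 < \<beta>" "\<beta> < pi"
    using sin_pos_mod_2pi[OF assms(2)] .
  show ?thesis
    unfolding arc2pi_def
    using a b by (intro CollectI exI[of _ t1] exI[of _ "t1 + \<alpha> + \<beta>"] exI[of _ "0::int"]
        exI[of _ "- (m1 + m2)"] exI[of _ "- m1"]) (auto simp: algebra_simps)
qed

definition cross2 :: "real \<times> real \<Rightarrow> real \<times> real \<Rightarrow> real" where
  "cross2 u v = fst u * snd v - snd u * fst v"

lemma cross2_polar: "cross2 (r * cos a, r * sin a) (q * cos b, q * sin b) = r * q * sin (b - a)"
  by (simp add: cross2_def sin_diff algebra_simps)

lemma theta_cross2_sgn: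
  assumes "cross2 (lin_vec u) (lin_vec v) \<noteq> 0"
  obtains s t where "theta u = Some s" "theta v = Some t"
    "sgn (sin (t - s)) = sgn (cross2 (lin_vec u) (lin_vec v))"
proof -
  have "lin_vec u \<noteq> (0, 0)" "lin_vec v \<noteq> (0, 0)" using assms by (auto simp: cross2_def)
  then obtain s r t q where "theta u = Some s" "r > 0" "lin_vec u = (r * cos s, r * sin s)"
      "theta v = Some t" "q > 0" "lin_vec v = (q * cos t, q * sin t)"
    by (metis theta_polar)
  then show thesis by (intro that) (simp_all add: cross2_polar sgn_mult)
qed

lemma cross2_lin_vec_comp:
  assumes "g = (\<lambda>x. a * x + b)" "h = (\<lambda>x. c * x + d)"
  shows "cross2 (lin_vec g) (lin_vec (g \<circ> h)) = a * ((g \<circ> h) 0 - (h \<circ> g) 0)"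
    and "cross2 (lin_vec h) (lin_vec (g \<circ> h)) = (h \<circ> g) 0 - (g \<circ> h) 0"
proof -
  have gh: "g \<circ> h = (\<lambda>x. (a * c) * x + (a * d + b))" using assms by (auto simp: algebra_simps)
  have "lin_vec (g \<circ> h) = (a * d + b, 1 - a * c)" unfolding gh by (rule lin_vec_affine)
  moreover have "lin_vec g = (b, 1 - a)" "lin_vec h = (d, 1 - c)"
    unfolding assms by (rule lin_vec_affine)+
  ultimately show "cross2 (lin_vec g) (lin_vec (g \<circ> h)) = a * ((g \<circ> h) 0 - (h \<circ> g) 0)"
    and "cross2 (lin_vec h) (lin_vec (g \<circ> h)) = (h \<circ> g) 0 - (g \<circ> h) 0"
    using assms by (simp_all add: cross2_def algebra_simps)
qed

lemma theta_comp_sgn: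
  assumes F: "monotone_linear F" and G: "monotone_linear G"
    and H: "monotone_linear H" and K: "monotone_linear K"
    and comp: "F \<circ> G = H \<circ> K"
    and "(F \<circ> G) 0 \<noteq> (G \<circ> F) 0" "(H \<circ> K) 0 \<noteq> (K \<circ> H) 0"
  obtains t t1 t2 where "theta (F \<circ> G) = Some t" "theta F = Some t1" "theta K = Some t2"
    "sgn (sin (t - t1)) = sgn ((F \<circ> G) 0 - (G \<circ> F) 0)"
    "sgn (sin (t2 - t)) = sgn ((H \<circ> K) 0 - (K \<circ> H) 0)"
proof -
  obtain aF bF aG bG aH bH aK bK where "aF > 0" and
    affine: "F = (\<lambda>x. aF * x + bF)" "G = (\<lambda>x. aG * x + bG)"
            "H = (\<lambda>x. aH * x + bH)" "K = (\<lambda>x. aK * x + bK)"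
    using F G H K unfolding monotone_linear_def by metis
  then have crossF: "cross2 (lin_vec F) (lin_vec (F \<circ> G)) = aF * ((F \<circ> G) 0 - (G \<circ> F) 0)"
    and crossK: "cross2 (lin_vec K) (lin_vec (F \<circ> G)) = (K \<circ> H) 0 - (H \<circ> K) 0"
    using cross2_lin_vec_comp comp by metis+
  have "cross2 (lin_vec F) (lin_vec (F \<circ> G)) \<noteq> 0" using crossF assms(6) \<open>aF > 0\<close> by simp
  then obtain t1 t where t1: "theta F = Some t1" "theta (F \<circ> G) = Some t"
    and sgn1: "sgn (sin (t - t1)) = sgn (cross2 (lin_vec F) (lin_vec (F \<circ> G)))"
    by (rule theta_cross2_sgn)
  have "cross2 (lin_vec K) (lin_vec (F \<circ> G)) \<noteq> 0" using crossK assms(7) by simp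
  then obtain t2 t' where t2: "theta K = Some t2" "theta (F \<circ> G) = Some t'"
    and sgn2: "sgn (sin (t' - t2)) = sgn (cross2 (lin_vec K) (lin_vec (F \<circ> G)))"
    by (rule theta_cross2_sgn)
  have "t' = t" using t1(2) t2(2) by simp
  have s1: "sgn (sin (t - t1)) = sgn ((F \<circ> G) 0 - (G \<circ> F) 0)"
    using sgn1 crossF \<open>aF > 0\<close> by (simp add: sgn_mult)
  have s2: "sgn (sin (t2 - t)) = sgn ((H \<circ> K) 0 - (K \<circ> H) 0)"
    using sgn2 crossK \<open>t' = t\<close> by (metis minus_diff_eq sgn_minus sin_minus)
  show thesis by (rule that[OF t1(2) t1(1) t2(1) s1 s2])
qed

lemma theta_comp_plus_pi_in_arc:
  assumes "monotone_linear F" "monotone_linear G" "monotone_linear H" "monotone_linear K"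
    and "F \<circ> G = H \<circ> K"
    and "(F \<circ> G) 0 < (G \<circ> F) 0" "(H \<circ> K) 0 < (K \<circ> H) 0"
  shows "\<exists>t t1 t2. theta (F \<circ> G) = Some t \<and> theta F = Some t1 \<and> theta K = Some t2 \<and>
    t + pi \<in> arc2pi t1 t2"
proof -
  obtain t t1 t2 where theta: "theta (F \<circ> G) = Some t" "theta F = Some t1" "theta K = Some t2"
    and "sgn (sin (t - t1)) = sgn ((F \<circ> G) 0 - (G \<circ> F) 0)"
        "sgn (sin (t2 - t)) = sgn ((H \<circ> K) 0 - (K \<circ> H) 0)"
    using theta_comp_sgn[OF assms(1-5)] assms(6,7) by (metis less_irrefl)
  with assms(6,7) have "sin (t - t1) < 0" "sin (t2 - t) < 0"
    by (simp_all add: sgn_1_neg)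
  then have "sin (t + pi - t1) > 0" "sin (t2 - (t + pi)) > 0"
    by (simp_all add: sin_diff sin_add)
  with theta show ?thesis by (blast intro: arc2pi_if_sin_pos)
qed

lemma theta_comp_in_arc:
  assumes "monotone_linear F" "monotone_linear G" "monotone_linear H" "monotone_linear K"
    and "F \<circ> G = H \<circ> K"
    and "(F \<circ> G) 0 > (G \<circ> F) 0" "(H \<circ> K) 0 > (K \<circ> H) 0"
  shows "\<exists>t t1 t2. theta (F \<circ> G) = Some t \<and> theta F = Some t1 \<and> theta K = Some t2 \<and>
    t \<in> arc2pi t1 t2"
proof -
  obtain t t1 t2 where theta: "theta (F \<circ> G) = Some t" "theta F = Some t1" "theta K = Some t2"
    and "sgn (sin (t - t1)) = sgn ((F \<circ> G) 0 - (G \<circ> F) 0)"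
        "sgn (sin (t2 - t)) = sgn ((H \<circ> K) 0 - (K \<circ> H) 0)"
    using theta_comp_sgn[OF assms(1-5)] assms(6,7) by (metis less_irrefl)
  with assms(6,7) have "sin (t - t1) > 0" "sin (t2 - t) > 0"
    by (simp_all add: sgn_1_pos)
  with theta show ?thesis by (blast intro: arc2pi_if_sin_pos)
qed

lemma seq_comp_cong: "(\<And>i. i \<in> {1..k} \<Longrightarrow> g i = g' i) \<Longrightarrow> seq_comp g k = seq_comp g' k"
  by (induction k) auto

lemma seq_comp_Suc_first: "seq_comp g (Suc k) = seq_comp (\<lambda>i. g (Suc i)) k \<circ> g 1"
  by (induction k) (simp_all only: seq_comp.simps comp_assoc id_comp comp_id One_nat_def)

lemma seq_comp_monotone_linear:
  "(\<And>i. i \<in> {1..k} \<Longrightarrow> monotone_linear (g i)) \<Longrightarrow> monotone_linear (seq_comp g k)"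
proof (induction k)
  case 0
  show ?case unfolding monotone_linear_def by (intro exI[of _ 1] exI[of _ 0]) (simp add: id_def)
next
  case (Suc k)
  then have "monotone_linear (seq_comp g k)" "monotone_linear (g (Suc k))" by simp_all
  then obtain a b c d where "a > 0" "seq_comp g k = (\<lambda>x. a * x + b)"
    and "c > 0" "g (Suc k) = (\<lambda>x. c * x + d)"
    unfolding monotone_linear_def by blast
  then show ?case unfolding monotone_linear_def
    by (intro exI[of _ "c * a"] exI[of _ "c * b + d"]) (auto simp: algebra_simps)
qed

lemma perm_comp_Suc:
  "perm_comp f \<sigma> (Suc m) = f (\<sigma> (Suc m)) \<circ> seq_comp (\<lambda>i. f (\<sigma> i)) m"
  "perm_comp f \<sigma> (Suc m) = seq_comp (\<lambda>i. f (\<sigma> (Suc i))) m \<circ> f (\<sigma> 1)"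
  unfolding perm_comp_def by (simp, rule seq_comp_Suc_first)

lemma perm_comp_kshift_pred:
  "perm_comp f (kshift \<sigma> (Suc m) m) (Suc m) = seq_comp (\<lambda>i. f (\<sigma> i)) m \<circ> f (\<sigma> (Suc m))"
proof -
  have "seq_comp (\<lambda>i. f (kshift \<sigma> (Suc m) m (Suc i))) m = seq_comp (\<lambda>i. f (\<sigma> i)) m"
    by (rule seq_comp_cong) (simp add: kshift_def)
  then show ?thesis unfolding perm_comp_Suc(2) by (simp add: kshift_def)
qed

lemma perm_comp_kshift_1:
  "perm_comp f (kshift \<sigma> (Suc m) 1) (Suc m) = f (\<sigma> 1) \<circ> seq_comp (\<lambda>i. f (\<sigma> (Suc i))) m"
proof -
  have "seq_comp (\<lambda>i. f (kshift \<sigma> (Suc m) 1 i)) m = seq_comp (\<lambda>i. f (\<sigma> (Suc i))) m"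
    by (rule seq_comp_cong) (simp add: kshift_def)
  then show ?thesis unfolding perm_comp_Suc(1) by (simp add: kshift_def)
qed

theorem mainTheorem10:
  fixes f :: "nat \<Rightarrow> real \<Rightarrow> real" and \<sigma> :: "nat \<Rightarrow> nat" and n :: nat
  assumes n2: "n \<ge> 2"
    and mono: "\<forall>i\<in>{1..n}. monotone_linear (f i)"
    and perm: "\<sigma> permutes {1..n}"
  shows "((\<forall>x. perm_comp f \<sigma> n x < min (perm_comp f (kshift \<sigma> n 1) n x)
                                         (perm_comp f (kshift \<sigma> n (n - 1)) n x))
           \<longrightarrow> (\<exists>t t1 t2. theta (perm_comp f \<sigma> n) = Some t \<and>
                   theta (f (\<sigma> n)) = Some t1 \<and> theta (f (\<sigma> 1)) = Some t2 \<and>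
                   t + pi \<in> arc2pi t1 t2)) \<and>
         ((\<forall>x. perm_comp f \<sigma> n x > max (perm_comp f (kshift \<sigma> n 1) n x)
                                         (perm_comp f (kshift \<sigma> n (n - 1)) n x))
           \<longrightarrow> (\<exists>t t1 t2. theta (perm_comp f \<sigma> n) = Some t \<and>
                   theta (f (\<sigma> n)) = Some t1 \<and> theta (f (\<sigma> 1)) = Some t2 \<and>
                   t \<in> arc2pi t1 t2))"
proof -
  obtain m where n: "n = Suc m" using n2 by (cases n) auto
  define G where "G = seq_comp (\<lambda>i. f (\<sigma> i)) m"
  define H where "H = seq_comp (\<lambda>i. f (\<sigma> (Suc i))) m"
  have "\<And>i. i \<in> {1..n} \<Longrightarrow> monotone_linear (f (\<sigma> i))"
    using mono permutes_in_image[OF perm] by blast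
  then have mono_parts: "monotone_linear (f (\<sigma> n))" "monotone_linear G"
      "monotone_linear H" "monotone_linear (f (\<sigma> 1))"
    unfolding G_def H_def n by (auto intro!: seq_comp_monotone_linear)
  have P: "perm_comp f \<sigma> n = f (\<sigma> n) \<circ> G" and comm: "f (\<sigma> n) \<circ> G = H \<circ> f (\<sigma> 1)"
    unfolding G_def H_def n using perm_comp_Suc[of f \<sigma> m] by simp_all
  have shifts: "perm_comp f (kshift \<sigma> n (n - 1)) n = G \<circ> f (\<sigma> n)"
      "perm_comp f (kshift \<sigma> n 1) n = f (\<sigma> 1) \<circ> H"
    unfolding G_def H_def n diff_Suc_1 by (rule perm_comp_kshift_pred, rule perm_comp_kshift_1)
  show ?thesis
    unfolding P shifts
    using theta_comp_plus_pi_in_arc[OF mono_parts comm] theta_comp_in_arc[OF mono_parts comm]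
    by (simp add: comm)
qed

end
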